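(* Suppose that $h^{(n)}$ is a conserved density, homogeneous of degree $n$, for the system $u^i_t = a^i_{jk} u^j u^k_x$. Then the function $h^{(n+1)}$ obtained by the recursion $h^{(n+1)} = a^i_{jk} u^j u^k \frac{\partial h^{(n)}}{\partial u^i}$ is a conserved density if and only if \[ \Delta_{irj}^{~~~s} u^r \frac{\partial h^{(n)}}{\partial u^s} = 0\,. \] Thus for an associative algebra all obstructions vanish.
   Context: Consider the hydrodynamic system $u^i_t = a^i_{jk} u^j u^k_x$, $i,j,k=1,\ldots,N$, with constant $a^i_{jk}$ regarded as structure constants of an algebra ${\cal F}$ with basis $e_i$, $e_i\circ e_j = a^k_{ij} e_k$. The algebra ${\cal F}$ is assumed commutative, to have a unity element $e_1$ ($e_1\circ e_i=e_i$), and to carry a non-degenerate inner product $\eta_{ij}$ satisfying the Frobenius condition $\langle a\circ b,c\rangle=\langle a,b\circ c\rangle$ (equivalently $a_{ijk}$, with indices lowered by $\eta$, is totally symmetric). The system is Hamiltonian with respect to the bracket $\{H,G\}=\int \frac{\delta H}{\delta u^i}\eta^{ij}\frac{d}{dx}\frac{\delta G}{\delta u^j}dx$ and Hamiltonian density $h^{(3)}=\frac{1}{3!}a_{ijk}u^iu^ju^k$. A conserved density $h^{(n)}$ (a hydrodynamic density with $\{H^{(n)},H^{(3)}\}=0$, $H^{(n)}=\int h^{(n)}dx$, under rapidly decreasing or periodic boundary conditions) is one satisfying the overdetermined system $a^i_{jk} u^j \frac{\partial^2 h^{(n)}}{\partial u^i \partial u^p} = a^i_{jp} u^j \frac{\partial^2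 h^{(n)}}{\partial u^i \partial u^k}$; densities are assumed homogeneous of degree $n$, i.e. $u^i\partial_i h^{(n)} = n h^{(n)}$. The associator is $\Delta_{ijk}^{~~~s} = a_{ij}^{~~r} a_{rk}^{~~s} - a_{jk}^{~~r} a_{ir}^{~~s}$, i.e. $(e_i\circ e_j)\circ e_k - e_i\circ(e_j\circ e_k)=\Delta_{ijk}^{~~~s}e_s$. *)

theory Defs
  imports "HOL-Analysis.Analysis"
begin

text \<open>Points u of R^N are vectors u :: real^'n, indices range over the finite type 'n.
  Structure constants: a i j k stands for a^i_{jk}; eta i j for eta_{ij}.\<close>

definition pd :: "'n::finite \<Rightarrow> (real^'n \<Rightarrow> real) \<Rightarrow> real^'n \<Rightarrow> real" where
  "pd i f u = deriv (\<lambda>t. f (u + t *\<^sub>R axis i 1)) 0"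

fun Ck_partial :: "nat \<Rightarrow> (real^'n::finite \<Rightarrow> real) \<Rightarrow> bool" where
  "Ck_partial 0 f = continuous_on UNIV f"
| "Ck_partial (Suc k) f = (continuous_on UNIV f \<and>
     (\<forall>i u. (\<lambda>t. f (u + t *\<^sub>R axis i 1)) differentiable (at 0)) \<and>
     (\<forall>i. Ck_partial k (pd i f)))"

definition smooth_fun :: "(real^'n::finite \<Rightarrow> real) \<Rightarrow> bool" where
  "smooth_fun f \<longleftrightarrow> (\<forall>k. Ck_partial k f)"

definition lower :: "('n::finite \<Rightarrow> 'n \<Rightarrow> real) \<Rightarrow> ('n \<Rightarrow> 'n \<Rightarrow> 'n \<Rightarrow> real) \<Rightarrow> 'n \<Rightarrow> 'n \<Rightarrow> 'n \<Rightarrow> real" where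
  "lower eta a i j k = (\<Sum>l\<in>UNIV. eta i l * a l j k)"

definition frobenius_algebra ::
  "('n::finite \<Rightarrow> 'n \<Rightarrow> 'n \<Rightarrow> real) \<Rightarrow> ('n \<Rightarrow> 'n \<Rightarrow> real) \<Rightarrow> 'n \<Rightarrow> bool" where
  "frobenius_algebra a eta e \<longleftrightarrow>
     (\<forall>i j k. a i j k = a i k j) \<and>
     (\<forall>i j. a i e j = (if i = j then 1 else 0)) \<and>
     (\<forall>i j. eta i j = eta j i) \<and>
     det (\<chi> i j. eta i j) \<noteq> 0 \<and>
     (\<forall>i j k. lower eta a i j k = lower eta a j i k \<and> lower eta a i j k = lower eta a i k j)"

definition conserved_density :: "('n::finite \<Rightarrow> 'n \<Rightarrow> 'n \<Rightarrow> real) \<Rightarrow> (real^'n \<Rightarrow> real) \<Rightarrow> bool" where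
  "conserved_density a h \<longleftrightarrow>
     (\<forall>u k p. (\<Sum>i\<in>UNIV. \<Sum>j\<in>UNIV. a i j k * u$j * pd i (pd p h) u)
            = (\<Sum>i\<in>UNIV. \<Sum>j\<in>UNIV. a i j p * u$j * pd i (pd k h) u))"

definition homogeneous_deg :: "nat \<Rightarrow> (real^'n::finite \<Rightarrow> real) \<Rightarrow> bool" where
  "homogeneous_deg n h \<longleftrightarrow> (\<forall>u. (\<Sum>i\<in>UNIV. u$i * pd i h u) = real n * h u)"

definition assoc :: "('n::finite \<Rightarrow> 'n \<Rightarrow> 'n \<Rightarrow> real) \<Rightarrow> 'n \<Rightarrow> 'n \<Rightarrow> 'n \<Rightarrow> 'n \<Rightarrow> real" where
  "assoc a i j k s = (\<Sum>r\<in>UNIV. a r i j * a s r k - a r j k * a s i r)"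

definition next_density :: "('n::finite \<Rightarrow> 'n \<Rightarrow> 'n \<Rightarrow> real) \<Rightarrow> (real^'n \<Rightarrow> real) \<Rightarrow> real^'n \<Rightarrow> real" where
  "next_density a h u = (\<Sum>i\<in>UNIV. \<Sum>j\<in>UNIV. \<Sum>k\<in>UNIV. a i j k * u$j * u$k * pd i h u)"

end

theory Submission
  imports Defs
begin

(* Write L(u) for the matrix of multiplication by u, L(u)^i_k = a^i_{jk} u^j, so that h is conserved
  iff L(u)^T Hess h(u) is symmetric, and h^(n+1) = <grad h, u o u>.  Differentiating the
  conservation law once and contracting it with u, Euler's identities for the homogeneous h turn
  the third derivatives into second ones, which yields the Hessian of h^(n+1) in closed form:
    d_q d_p h^(n+1) = (n + 1) (a^i_{qp} d_i h + L^i_p d_q d_i h).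
  In L(u)^T Hess h^(n+1) the second summand gives a symmetric matrix, while the antisymmetric
  part of the first one is (n + 1) Delta_{krp}^s u^r d_s h.  That mixed partial derivatives
  commute (Schwarz) is derived from the mean value theorem applied to a second difference. *)

definition partially_differentiable :: "(real^'n::finite \<Rightarrow> real) \<Rightarrow> bool" where
  "partially_differentiable f \<longleftrightarrow>
     (\<forall>i u. ((\<lambda>t. f (u + t *\<^sub>R axis i 1)) has_real_derivative pd i f u) (at 0))"

lemma pd_eqI:
  "((\<lambda>t. f (u + t *\<^sub>R axis i 1)) has_real_derivative D) (at 0) \<Longrightarrow> pd i f u = D"
  unfolding pd_def by (rule DERIV_imp_deriv)

lemma partially_differentiableD:
  "partially_differentiable f \<Longrightarrow> ((\<lambda>t. f (u + t *\<^sub>R axis i 1)) has_real_derivative pd i f u) (at 0)"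
  unfolding partially_differentiable_def by blast

lemma partially_differentiable_line_derivative:
  assumes "partially_differentiable f"
  shows "((\<lambda>t. f (u + t *\<^sub>R axis i 1)) has_real_derivative pd i f (u + t *\<^sub>R axis i 1)) (at t)"
proof -
  have "(\<lambda>s. f ((u + t *\<^sub>R axis i 1) + s *\<^sub>R axis i 1)) = (\<lambda>s. f (u + (s + t) *\<^sub>R axis i 1))"
    by (simp add: scaleR_add_left algebra_simps)
  then show ?thesis
    using partially_differentiableD[OF assms, of "u + t *\<^sub>R axis i 1" i]
      DERIV_shift[of "\<lambda>t. f (u + t *\<^sub>R axis i 1)" _ 0 t] by simp
qed

lemma pd_const [simp]: "pd i (\<lambda>u. c) u = 0"
  by (rule pd_eqI) simp

lemma partially_differentiable_const [simp]: "partially_differentiable (\<lambda>u. c)"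
  unfolding partially_differentiable_def by simp

lemma coordinate_line_derivative:
  "((\<lambda>t. (u + t *\<^sub>R axis i 1) $ j) has_real_derivative (if i = j then 1 else 0)) (at 0)"
proof -
  have "(\<lambda>t. (u + t *\<^sub>R axis i 1) $ j) = (\<lambda>t. u $ j + t * (if i = j then 1 else 0))"
    by (auto simp: axis_def)
  then show ?thesis by (auto intro!: derivative_eq_intros)
qed

lemma pd_coordinate [simp]: "pd i (\<lambda>u. u $ j) u = (if i = j then 1 else 0)"
  using coordinate_line_derivative by (rule pd_eqI)

lemma partially_differentiable_coordinate [simp]: "partially_differentiable (\<lambda>u. u $ j)"
  unfolding partially_differentiable_def pd_coordinate using coordinate_line_derivative by blast

context
  fixes f g :: "real^'n::finite \<Rightarrow> real"
  assumes f: "partially_differentiable f" and g: "partially_differentiable g"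
begin

lemma pd_add [simp]: "pd i (\<lambda>u. f u + g u) u = pd i f u + pd i g u"
  by (rule pd_eqI) (intro DERIV_add partially_differentiableD f g)

lemma partially_differentiable_add [simp]: "partially_differentiable (\<lambda>u. f u + g u)"
  unfolding partially_differentiable_def by (auto intro!: DERIV_add partially_differentiableD f g)

lemma pd_diff [simp]: "pd i (\<lambda>u. f u - g u) u = pd i f u - pd i g u"
  by (rule pd_eqI) (intro DERIV_diff partially_differentiableD f g)

lemma partially_differentiable_diff [simp]: "partially_differentiable (\<lambda>u. f u - g u)"
  unfolding partially_differentiable_def by (auto intro!: DERIV_diff partially_differentiableD f g)

lemma pd_mult [simp]: "pd i (\<lambda>u. f u * g u) u = f u * pd i g u + pd i f u * g u"
  by (rule pd_eqI)
    (use DERIV_mult'[OF partially_differentiableD[OF f] partially_differentiableD[OF g]] in simp)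

lemma partially_differentiable_mult [simp]: "partially_differentiable (\<lambda>u. f u * g u)"
  unfolding partially_differentiable_def
  using DERIV_mult'[OF partially_differentiableD[OF f] partially_differentiableD[OF g]] by simp

end

context
  fixes f :: "'a \<Rightarrow> real^'n::finite \<Rightarrow> real" and A :: "'a set"
  assumes f: "\<And>k. k \<in> A \<Longrightarrow> partially_differentiable (f k)"
begin

lemma pd_sum [simp]: "pd i (\<lambda>u. \<Sum>k\<in>A. f k u) u = (\<Sum>k\<in>A. pd i (f k) u)"
  by (rule pd_eqI) (intro DERIV_sum partially_differentiableD f)

lemma partially_differentiable_sum [simp]: "partially_differentiable (\<lambda>u. \<Sum>k\<in>A. f k u)"
  unfolding partially_differentiable_def by (auto intro!: DERIV_sum partially_differentiableD f)

end

lemma pd_translate: "pd i (\<lambda>v. f (v + c)) u = pd i f (u + c)"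
  unfolding pd_def by (simp add: algebra_simps)

lemma partially_differentiable_translate:
  assumes "partially_differentiable f"
  shows "partially_differentiable (\<lambda>v. f (v + c))"
  unfolding partially_differentiable_def pd_translate
proof (intro allI)
  fix i u
  show "((\<lambda>t. f (u + t *\<^sub>R axis i 1 + c)) has_real_derivative pd i f (u + c)) (at 0)"
    using partially_differentiableD[OF assms, of "u + c" i] by (simp add: ac_simps)
qed

lemma smooth_fun_pd [simp]: "smooth_fun f \<Longrightarrow> smooth_fun (pd i f)"
  unfolding smooth_fun_def by (metis Ck_partial.simps(2))

lemma smooth_fun_continuous: "smooth_fun f \<Longrightarrow> continuous_on UNIV f"
  unfolding smooth_fun_def by (metis Ck_partial.simps(1))

lemma smooth_fun_partially_differentiable [simp]:
  "smooth_fun f \<Longrightarrow> partially_differentiable f"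
  unfolding smooth_fun_def partially_differentiable_def pd_def
  by (metis Ck_partial.simps(2) DERIV_deriv_iff_real_differentiable)

lemma pd_mean_value:
  assumes "partially_differentiable f" "s > 0"
  obtains z where "0 < z" "z < s" "f (u + s *\<^sub>R axis i 1) - f u = s * pd i f (u + z *\<^sub>R axis i 1)"
proof -
  let ?F = "\<lambda>t. f (u + t *\<^sub>R axis i 1)"
  have F: "\<And>t. (?F has_real_derivative pd i f (u + t *\<^sub>R axis i 1)) (at t)"
    using partially_differentiable_line_derivative[OF assms(1)] .
  then have "continuous_on {0..s} ?F"
    by (meson DERIV_isCont continuous_at_imp_continuous_on)
  moreover have "\<And>t. ?F differentiable (at t)"
    using F real_differentiable_def by blast
  ultimately obtain l z where z: "0 < z" "z < s"
    and l: "(?F has_real_derivative l) (at z)" and mvt: "?F s - ?F 0 = (s - 0) * l"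
    using MVT[OF assms(2)] by blast
  have "l = pd i f (u + z *\<^sub>R axis i 1)"
    using DERIV_unique[OF l F] .
  with z mvt show ?thesis by (intro that) auto
qed

lemma second_difference_mixed_pd:
  assumes f: "smooth_fun f" and s: "s > 0"
  obtains x where "norm (x - u) < 2 * s"
    and "f (u + s *\<^sub>R axis i 1 + s *\<^sub>R axis j 1) - f (u + s *\<^sub>R axis i 1)
           - f (u + s *\<^sub>R axis j 1) + f u = s * s * pd j (pd i f) x"
proof -
  define g where "g v = f (v + s *\<^sub>R axis j 1) - f v" for v
  have "partially_differentiable g"
    unfolding g_def using f by (simp add: partially_differentiable_translate)
  then obtain z where z: "0 < z" "z < s"
    and gz: "g (u + s *\<^sub>R axis i 1) - g u = s * pd i g (u + z *\<^sub>R axis i 1)"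
    using pd_mean_value s by blast
  have pd_g: "pd i g v = pd i f (v + s *\<^sub>R axis j 1) - pd i f v" for v
    unfolding g_def using f by (simp add: partially_differentiable_translate pd_translate)
  obtain w where w: "0 < w" "w < s"
    and "pd i f (u + z *\<^sub>R axis i 1 + s *\<^sub>R axis j 1) - pd i f (u + z *\<^sub>R axis i 1)
           = s * pd j (pd i f) (u + z *\<^sub>R axis i 1 + w *\<^sub>R axis j 1)"
    using pd_mean_value[of "pd i f" s "u + z *\<^sub>R axis i 1" j] f s by auto
  with gz pd_g have "f (u + s *\<^sub>R axis i 1 + s *\<^sub>R axis j 1) - f (u + s *\<^sub>R axis i 1)
           - f (u + s *\<^sub>R axis j 1) + f u
         = s * s * pd j (pd i f) (u + z *\<^sub>R axis i 1 + w *\<^sub>R axis j 1)"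
    by (simp add: g_def algebra_simps)
  moreover have "norm (z *\<^sub>R axis i 1 + w *\<^sub>R axis j (1::real)) < 2 * s"
    using norm_triangle_ineq[of "z *\<^sub>R axis i (1::real)" "w *\<^sub>R axis j 1"] z w by simp
  ultimately show ?thesis
    using that[of "u + z *\<^sub>R axis i 1 + w *\<^sub>R axis j 1"] by (simp add: add.assoc)
qed

lemma pd_commute:
  assumes f: "smooth_fun f"
  shows "pd j (pd i f) = pd i (pd j f)"
proof (rule ext, rule ccontr)
  fix u
  let ?D = "pd j (pd i f)" and ?D' = "pd i (pd j f)"
  assume "?D u \<noteq> ?D' u"
  then have e: "dist (?D u) (?D' u) / 2 > 0" (is "?e > 0") by simp
  have "continuous_on UNIV ?D" "continuous_on UNIV ?D'"
    using f by (simp_all add: smooth_fun_continuous)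
  then obtain d1 d2 where d: "d1 > 0" "d2 > 0"
    and d1: "\<And>x. dist x u < d1 \<Longrightarrow> dist (?D x) (?D u) < ?e"
    and d2: "\<And>x. dist x u < d2 \<Longrightarrow> dist (?D' x) (?D' u) < ?e"
    using e unfolding continuous_on_iff by (metis UNIV_I)
  define s where "s = min d1 d2 / 2"
  have s: "s > 0" using d by (simp add: s_def)
  obtain x where x: "norm (x - u) < 2 * s"
    and Dx: "f (u + s *\<^sub>R axis i 1 + s *\<^sub>R axis j 1) - f (u + s *\<^sub>R axis i 1)
         - f (u + s *\<^sub>R axis j 1) + f u = s * s * ?D x"
    using second_difference_mixed_pd[OF f s] by blast
  obtain y where y: "norm (y - u) < 2 * s"
    and Dy: "f (u + s *\<^sub>R axis j 1 + s *\<^sub>R axis i 1) - f (u + s *\<^sub>R axis j 1)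
         - f (u + s *\<^sub>R axis i 1) + f u = s * s * ?D' y"
    using second_difference_mixed_pd[OF f s] by blast
  \<comment> \<open>the second difference is symmetric in i and j\<close>
  have "?D x = ?D' y"
    using Dx Dy s by (simp add: algebra_simps)
  moreover have "dist (?D x) (?D u) < ?e" "dist (?D' y) (?D' u) < ?e"
    using x y d1[of x] d2[of y] by (auto simp: s_def dist_norm)
  ultimately show False
    using dist_triangle_half_r[of "?D x" "?D u" "dist (?D u) (?D' u)" "?D' u"] by simp
qed

lemmas times_if_distrib = if_distrib[where f = "(*) x" for x] if_distrib[where f = "\<lambda>y. y * x" for x]

lemma sum_if_zero: "(\<Sum>k\<in>A. if P then f k else 0) = (if P then sum f A else 0)"
  by simp

lemma sum_distrib_swap:
  fixes x :: "'a \<Rightarrow> 'c::comm_semiring_0"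
  shows "(\<Sum>p\<in>A. x p * (\<Sum>i\<in>B. c i * y i p)) = (\<Sum>i\<in>B. c i * (\<Sum>p\<in>A. x p * y i p))"
proof -
  have "(\<Sum>p\<in>A. x p * (\<Sum>i\<in>B. c i * y i p)) = (\<Sum>p\<in>A. \<Sum>i\<in>B. c i * (x p * y i p))"
    by (simp add: sum_distrib_left mult.left_commute)
  also have "\<dots> = (\<Sum>i\<in>B. c i * (\<Sum>p\<in>A. x p * y i p))"
    by (simp add: sum_distrib_left) (rule sum.swap)
  finally show ?thesis .
qed

(* mult_matrix a u is the matrix of v \<mapsto> u o v, and mult_square a u is u o u. *)
definition mult_matrix ::
    "('n::finite \<Rightarrow> 'n \<Rightarrow> 'n \<Rightarrow> real) \<Rightarrow> real^'n \<Rightarrow> 'n \<Rightarrow> 'n \<Rightarrow> real" where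
  "mult_matrix a u i k = (\<Sum>j\<in>UNIV. a i j k * u$j)"

definition mult_square ::
    "('n::finite \<Rightarrow> 'n \<Rightarrow> 'n \<Rightarrow> real) \<Rightarrow> real^'n \<Rightarrow> 'n \<Rightarrow> real" where
  "mult_square a u i = (\<Sum>j\<in>UNIV. \<Sum>k\<in>UNIV. a i j k * u$j * u$k)"

lemma partially_differentiable_mult_matrix [simp]:
  "partially_differentiable (\<lambda>u. mult_matrix a u i k)"
  unfolding mult_matrix_def by simp

lemma pd_mult_matrix [simp]: "pd q (\<lambda>u. mult_matrix a u i k) u = a i q k"
  unfolding mult_matrix_def by (simp add: times_if_distrib cong: if_cong)

lemma partially_differentiable_mult_square [simp]:
  "partially_differentiable (\<lambda>u. mult_square a u i)"
  unfolding mult_square_def by simp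

lemma pd_mult_square:
  assumes comm: "\<And>i j k. a i j k = a i k j"
  shows "pd q (\<lambda>u. mult_square a u i) u = 2 * mult_matrix a u i q"
  unfolding mult_square_def mult_matrix_def
  by (simp add: sum.distrib algebra_simps sum_distrib_left times_if_distrib sum_if_zero comm[of _ q] cong: if_cong)

lemma mult_square_eq: "mult_square a u i = (\<Sum>k\<in>UNIV. mult_matrix a u i k * u$k)"
  unfolding mult_square_def mult_matrix_def sum_distrib_right by (rule sum.swap)

lemma next_density_eq: "next_density a h = (\<lambda>u. \<Sum>i\<in>UNIV. mult_square a u i * pd i h u)"
  unfolding next_density_def mult_square_def by (simp add: sum_distrib_right)

lemma conserved_density_iff:
  "conserved_density a h \<longleftrightarrow>
     (\<forall>u k p. (\<Sum>i\<in>UNIV. mult_matrix a u i k * pd i (pd p h) u)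
            = (\<Sum>i\<in>UNIV. mult_matrix a u i p * pd i (pd k h) u))"
  unfolding conserved_density_def mult_matrix_def by (simp add: sum_distrib_right)

lemma pd_next_density:
  assumes comm: "\<And>i j k. a i j k = a i k j" and h: "smooth_fun h"
  shows "pd p (next_density a h) = (\<lambda>u. 2 * (\<Sum>i\<in>UNIV. mult_matrix a u i p * pd i h u)
           + (\<Sum>i\<in>UNIV. mult_square a u i * pd p (pd i h) u))"
  unfolding next_density_eq using h
  by (intro ext) (simp add: pd_mult_square[OF comm] sum.distrib sum_distrib_left mult_ac)

lemma pd2_next_density:
  assumes comm: "\<And>i j k. a i j k = a i k j" and h: "smooth_fun h"
  shows "pd q (pd p (next_density a h)) u =
           2 * (\<Sum>i\<in>UNIV. a i q p * pd i h u)
         + 2 * (\<Sum>i\<in>UNIV. mult_matrix a u i p * pd q (pd i h) u)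
         + 2 * (\<Sum>i\<in>UNIV. mult_matrix a u i q * pd p (pd i h) u)
         + (\<Sum>i\<in>UNIV. mult_square a u i * pd q (pd p (pd i h)) u)"
  unfolding pd_next_density[OF comm h] using h
  by (simp add: pd_mult_square[OF comm] sum.distrib sum_distrib_left distrib_left mult_ac)

lemma euler_pd:
  assumes f: "smooth_fun f" and euler: "\<And>u. (\<Sum>i\<in>UNIV. u$i * pd i f u) = c * f u"
  shows "(\<Sum>i\<in>UNIV. u$i * pd p (pd i f) u) = (c - 1) * pd p f u"
proof -
  have "pd p (\<lambda>u. \<Sum>i\<in>UNIV. u$i * pd i f u) u = pd p (\<lambda>u. c * f u) u"
    by (simp only: euler)
  then have "pd p f u + (\<Sum>i\<in>UNIV. u$i * pd p (pd i f) u) = c * pd p f u"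
    using f by (simp add: sum.distrib times_if_distrib cong: if_cong)
  then show ?thesis
    by (simp add: algebra_simps)
qed

lemma pd_conservation_law:
  assumes h: "smooth_fun h" and cons: "conserved_density a h"
  shows "(\<Sum>i\<in>UNIV. a i q k * pd i (pd p h) u)
         + (\<Sum>i\<in>UNIV. mult_matrix a u i k * pd q (pd i (pd p h)) u)
       = (\<Sum>i\<in>UNIV. a i q p * pd i (pd k h) u)
         + (\<Sum>i\<in>UNIV. mult_matrix a u i p * pd q (pd i (pd k h)) u)"
proof -
  have "(\<lambda>u. \<Sum>i\<in>UNIV. mult_matrix a u i k * pd i (pd p h) u)
      = (\<lambda>u. \<Sum>i\<in>UNIV. mult_matrix a u i p * pd i (pd k h) u)"
    using cons by (simp add: conserved_density_iff)
  then have "pd q (\<lambda>u. \<Sum>i\<in>UNIV. mult_matrix a u i k * pd i (pd p h) u) u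
           = pd q (\<lambda>u. \<Sum>i\<in>UNIV. mult_matrix a u i p * pd i (pd k h) u) u"
    by simp
  then show ?thesis
    using h by (simp add: sum.distrib add.commute)
qed

lemma conserved_hessian_symmetric:
  assumes h: "smooth_fun h" and cons: "conserved_density a h"
  shows "(\<Sum>i\<in>UNIV. mult_matrix a u i p * pd q (pd i h) u) = (\<Sum>i\<in>UNIV. mult_matrix a u i q * pd p (pd i h) u)"
proof -
  have "(\<Sum>i\<in>UNIV. mult_matrix a u i p * pd q (pd i h) u) = (\<Sum>i\<in>UNIV. mult_matrix a u i p * pd i (pd q h) u)"
    unfolding pd_commute[OF h, where j = q] ..
  also have "\<dots> = (\<Sum>i\<in>UNIV. mult_matrix a u i q * pd i (pd p h) u)"
    using cons by (simp add: conserved_density_iff)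
  also have "\<dots> = (\<Sum>i\<in>UNIV. mult_matrix a u i q * pd p (pd i h) u)"
    unfolding pd_commute[OF h, where i = p] ..
  finally show ?thesis .
qed

lemma euler_hessian:
  assumes h: "smooth_fun h" and hom: "homogeneous_deg n h"
  shows "(\<Sum>p\<in>UNIV. u$p * pd i (pd p h) u) = (real n - 1) * pd i h u"
    and "(\<Sum>p\<in>UNIV. u$p * pd q (pd i (pd p h)) u) = (real n - 2) * pd q (pd i h) u"
proof -
  have E1: "(\<Sum>p\<in>UNIV. u$p * pd i (pd p h) u) = (real n - 1) * pd i h u" for u i
    using euler_pd[OF h] hom unfolding homogeneous_deg_def by blast
  then show "(\<Sum>p\<in>UNIV. u$p * pd i (pd p h) u) = (real n - 1) * pd i h u" .
  have "(\<Sum>p\<in>UNIV. u$p * pd p (pd i h) u) = (real n - 1) * pd i h u" for u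
    using E1[of u i] by (simp add: pd_commute[OF h, where j = i])
  then show "(\<Sum>p\<in>UNIV. u$p * pd q (pd i (pd p h)) u) = (real n - 2) * pd q (pd i h) u"
    using euler_pd[of "pd i h" "real n - 1" u q] h by (simp add: pd_commute[OF h, where j = i])
qed

lemma contracted_conservation_law:
  assumes comm: "\<And>i j k. a i j k = a i k j" and h: "smooth_fun h"
    and hom: "homogeneous_deg n h" and cons: "conserved_density a h"
  shows "(\<Sum>i\<in>UNIV. mult_square a u i * pd q (pd k (pd i h)) u)
       = (real n - 1) * (\<Sum>i\<in>UNIV. a i q k * pd i h u)
       + (real n - 3) * (\<Sum>i\<in>UNIV. mult_matrix a u i k * pd q (pd i h) u)"
proof -
  have law: "(\<Sum>p\<in>UNIV. u$p * ((\<Sum>i\<in>UNIV. a i q k * pd i (pd p h) u)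
                  + (\<Sum>i\<in>UNIV. mult_matrix a u i k * pd q (pd i (pd p h)) u)))
      = (\<Sum>p\<in>UNIV. u$p * ((\<Sum>i\<in>UNIV. a i q p * pd i (pd k h) u)
                  + (\<Sum>i\<in>UNIV. mult_matrix a u i p * pd q (pd i (pd k h)) u)))"
    using pd_conservation_law[OF h cons] by simp
  have t1: "(\<Sum>p\<in>UNIV. u$p * (\<Sum>i\<in>UNIV. a i q k * pd i (pd p h) u))
      = (real n - 1) * (\<Sum>i\<in>UNIV. a i q k * pd i h u)"
    by (subst sum_distrib_swap) (simp add: euler_hessian(1)[OF h hom] sum_distrib_left mult_ac)
  have t2: "(\<Sum>p\<in>UNIV. u$p * (\<Sum>i\<in>UNIV. mult_matrix a u i k * pd q (pd i (pd p h)) u))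
      = (real n - 2) * (\<Sum>i\<in>UNIV. mult_matrix a u i k * pd q (pd i h) u)"
    by (subst sum_distrib_swap) (simp add: euler_hessian(2)[OF h hom] sum_distrib_left mult_ac)
  have t3: "(\<Sum>p\<in>UNIV. u$p * (\<Sum>i\<in>UNIV. a i q p * pd i (pd k h) u))
      = (\<Sum>i\<in>UNIV. mult_matrix a u i k * pd q (pd i h) u)"
  proof -
    have "(\<Sum>p\<in>UNIV. u$p * (\<Sum>i\<in>UNIV. a i q p * pd i (pd k h) u))
        = (\<Sum>i\<in>UNIV. mult_matrix a u i q * pd i (pd k h) u)"
      unfolding mult_matrix_def
      by (simp add: sum_distrib_left sum_distrib_right comm[of _ q] mult_ac) (rule sum.swap)
    also have "\<dots> = (\<Sum>i\<in>UNIV. mult_matrix a u i k * pd i (pd q h) u)"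
      using cons by (simp add: conserved_density_iff)
    finally show ?thesis
      unfolding pd_commute[OF h, where j = q] .
  qed
  have t4: "(\<Sum>p\<in>UNIV. u$p * (\<Sum>i\<in>UNIV. mult_matrix a u i p * pd q (pd i (pd k h)) u))
      = (\<Sum>i\<in>UNIV. mult_square a u i * pd q (pd k (pd i h)) u)"
    unfolding mult_square_eq pd_commute[OF h, where i = k]
    by (simp add: sum_distrib_left sum_distrib_right mult_ac) (rule sum.swap)
  from law show ?thesis
    unfolding distrib_left sum.distrib t1 t2 t3 t4 by (simp add: algebra_simps)
qed

lemma hessian_next_density:
  assumes comm: "\<And>i j k. a i j k = a i k j" and h: "smooth_fun h"
    and hom: "homogeneous_deg n h" and cons: "conserved_density a h"
  shows "pd q (pd p (next_density a h)) u
       = (real n + 1) * ((\<Sum>i\<in>UNIV. a i q p * pd i h u) + (\<Sum>i\<in>UNIV. mult_matrix a u i p * pd q (pd i h) u))"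
  unfolding pd2_next_density[OF comm h] contracted_conservation_law[OF comm h hom cons]
    conserved_hessian_symmetric[OF h cons, of u q p]
  by (simp add: algebra_simps)

lemma sum_rotate3:
  "(\<Sum>i\<in>A. \<Sum>r\<in>B. \<Sum>s\<in>C. f i r s) = (\<Sum>r\<in>B. \<Sum>s\<in>C. \<Sum>i\<in>A. f i r s)"
proof -
  have "(\<Sum>i\<in>A. \<Sum>r\<in>B. \<Sum>s\<in>C. f i r s) = (\<Sum>r\<in>B. \<Sum>i\<in>A. \<Sum>s\<in>C. f i r s)"
    by (rule sum.swap)
  also have "\<dots> = (\<Sum>r\<in>B. \<Sum>s\<in>C. \<Sum>i\<in>A. f i r s)"
    by (intro sum.cong refl sum.swap)
  finally show ?thesis .
qed

lemma associator_contraction: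
  assumes comm: "\<And>i j k. a i j k = a i k j"
  shows "(\<Sum>r\<in>UNIV. \<Sum>s\<in>UNIV. assoc a k r p s * u$r * g s)
       = (\<Sum>i\<in>UNIV. mult_matrix a u i k * (\<Sum>s\<in>UNIV. a s i p * g s))
       - (\<Sum>i\<in>UNIV. mult_matrix a u i p * (\<Sum>s\<in>UNIV. a s i k * g s))"
proof -
  have "(\<Sum>r\<in>UNIV. \<Sum>s\<in>UNIV. assoc a k r p s * u$r * g s)
      = (\<Sum>r\<in>UNIV. \<Sum>s\<in>UNIV. \<Sum>i\<in>UNIV. a i k r * a s i p * u$r * g s - a i r p * a s k i * u$r * g s)"
    unfolding assoc_def by (simp add: sum_distrib_right left_diff_distrib)
  also have "\<dots> = (\<Sum>i\<in>UNIV. \<Sum>r\<in>UNIV. \<Sum>s\<in>UNIV. a i k r * a s i p * u$r * g s - a i r p * a s k i * u$r * g s)"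
    by (rule sum_rotate3[symmetric])
  also have "\<dots> = (\<Sum>i\<in>UNIV. \<Sum>r\<in>UNIV. \<Sum>s\<in>UNIV. a i k r * a s i p * u$r * g s)
      - (\<Sum>i\<in>UNIV. \<Sum>r\<in>UNIV. \<Sum>s\<in>UNIV. a i r p * a s k i * u$r * g s)"
    by (simp only: sum_subtractf)
  also have "(\<Sum>i\<in>UNIV. \<Sum>r\<in>UNIV. \<Sum>s\<in>UNIV. a i k r * a s i p * u$r * g s)
      = (\<Sum>i\<in>UNIV. mult_matrix a u i k * (\<Sum>s\<in>UNIV. a s i p * g s))"
    unfolding mult_matrix_def by (simp add: sum_distrib_left sum_distrib_right comm[of _ _ k] mult_ac)
  also have "(\<Sum>i\<in>UNIV. \<Sum>r\<in>UNIV. \<Sum>s\<in>UNIV. a i r p * a s k i * u$r * g s)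
      = (\<Sum>i\<in>UNIV. mult_matrix a u i p * (\<Sum>s\<in>UNIV. a s i k * g s))"
    unfolding mult_matrix_def by (simp add: sum_distrib_left sum_distrib_right comm[of _ _ k] mult_ac)
  finally show ?thesis .
qed

lemma conservation_defect_next_density:
  assumes comm: "\<And>i j k. a i j k = a i k j" and h: "smooth_fun h"
    and hom: "homogeneous_deg n h" and cons: "conserved_density a h"
  shows "(\<Sum>i\<in>UNIV. mult_matrix a u i k * pd i (pd p (next_density a h)) u)
       - (\<Sum>i\<in>UNIV. mult_matrix a u i p * pd i (pd k (next_density a h)) u)
       = (real n + 1) * (\<Sum>r\<in>UNIV. \<Sum>s\<in>UNIV. assoc a k r p s * u$r * pd s h u)"
proof -
  \<comment> \<open>Q is the symmetric matrix L(u)^T (Hess h) L(u); it drops out of the antisymmetrisation\<close>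
  define Q where
    "Q k p = (\<Sum>i\<in>UNIV. \<Sum>m\<in>UNIV. mult_matrix a u i k * mult_matrix a u m p * pd i (pd m h) u)" for k p
  have Q_sym: "Q p k = Q k p" for k p
  proof -
    have "Q p k = (\<Sum>i\<in>UNIV. \<Sum>m\<in>UNIV. mult_matrix a u m p * mult_matrix a u i k * pd m (pd i h) u)"
      unfolding Q_def by (rule sum.swap)
    also have "\<dots> = Q k p"
      unfolding Q_def by (intro sum.cong refl) (metis pd_commute[OF h] mult.commute)
    finally show ?thesis .
  qed
  have "(\<Sum>i\<in>UNIV. mult_matrix a u i k * pd i (pd p (next_density a h)) u)
      = (real n + 1) * ((\<Sum>i\<in>UNIV. mult_matrix a u i k * (\<Sum>s\<in>UNIV. a s i p * pd s h u)) + Q k p)" for k p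
    unfolding hessian_next_density[OF comm h hom cons] Q_def
    by (simp add: sum_distrib_left distrib_left sum.distrib mult_ac)
  then show ?thesis
    unfolding associator_contraction[OF comm] using Q_sym by (simp add: algebra_simps)
qed

theorem proposition1:
  fixes a :: "'n::finite \<Rightarrow> 'n \<Rightarrow> 'n \<Rightarrow> real"
    and eta :: "'n \<Rightarrow> 'n \<Rightarrow> real"
    and e :: 'n
    and h :: "real^'n \<Rightarrow> real"
    and n :: nat
  assumes "frobenius_algebra a eta e"
    and "smooth_fun h"
    and "homogeneous_deg n h"
    and "conserved_density a h"
  shows "(conserved_density a (next_density a h) \<longleftrightarrow>
           (\<forall>u i j. (\<Sum>r\<in>UNIV. \<Sum>s\<in>UNIV. assoc a i r j s * u$r * pd s h u) = 0))
       \<and> ((\<forall>i j k s. assoc a i j k s = 0) \<longrightarrow> conserved_density a (next_density a h))"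
proof -
  have comm: "\<And>i j k. a i j k = a i k j"
    using assms(1) unfolding frobenius_algebra_def by blast
  have "conserved_density a (next_density a h) \<longleftrightarrow>
     (\<forall>u k p. (\<Sum>i\<in>UNIV. mult_matrix a u i k * pd i (pd p (next_density a h)) u)
            - (\<Sum>i\<in>UNIV. mult_matrix a u i p * pd i (pd k (next_density a h)) u) = 0)"
    unfolding conserved_density_iff by simp
  also have "\<dots> \<longleftrightarrow> (\<forall>u i j. (\<Sum>r\<in>UNIV. \<Sum>s\<in>UNIV. assoc a i r j s * u$r * pd s h u) = 0)"
    unfolding conservation_defect_next_density[OF comm assms(2-4)] by simp
  finally show ?thesis by simp
qed

end
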